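(* Let $\mathbf{A}\in\mathbb{R}^{n\times n}$ be symmetric positive definite with (2-norm) condition number $\kappa$, let $\mathbf{y}\in\mathbb{R}^n$, and let $\mathbf{x}=\mathbf{A}^{-1}\mathbf{y}$. Let $\{\mathbf{x}_i\}_{i=0}^n$ be the iterates of the conjugate gradient (CG) method applied to $\mathbf{A}\mathbf{x}=\mathbf{y}$ with initial guess $\mathbf{x}_0=0$. Let $1\le i_{\min}<i_{\max}\le n$ be integers and let $Q$ be a random variable supported on $\{i_{\min},\dots,i_{\max}\}$ with $\mathbb{P}(Q=j)>0$ for each $j$ in this set. Define the TSS-Solve estimator \[ \widetilde{\mathbf{x}}_{\mathrm{tss}}=\frac{\mathbf{x}_Q-\mathbf{x}_{Q-1}}{\mathbb{P}(Q)}+\mathbf{x}_{i_{\min}-1}, \] where $\mathbb{P}(Q)$ denotes $\mathbb{P}(Q=j)$ at the realized value $j$ of $Q$. Then \[ \mathbb{E}\big[\widetilde{\mathbf{x}}_{\mathrm{tss}}\big]=\mathbf{x}_{i_{\max}} \qquad\text{and}\qquad \mathrm{Var}\big(\widetilde{\mathbf{x}}_{\mathrm{tss}}\big)\le 16\,\kappa^2\,\|\mathbf{x}\|^2\,\Gamma, \] where \[ \Gamma:=\sum_{j=i_{\min}}^{i_{\max}}\frac{\varrho^{2(j-1)}}{\mathbb{P}(Q=j)},\qquad \varrho:=\frac{\sqrt{\kappa}-1}{\sqrt{\kappa}+1}\in[0,1). \]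
   Context: CG is the standard conjugate gradient method in exact arithmetic: with $\mathbf{r}_0=\mathbf{y}-\mathbf{A}\mathbf{x}_0$, $\mathbf{p}_0=\mathbf{r}_0$, and for $j\ge0$: $\alpha_j=\mathbf{r}_j^\top\mathbf{r}_j/(\mathbf{p}_j^\top\mathbf{A}\mathbf{p}_j)$, $\mathbf{x}_{j+1}=\mathbf{x}_j+\alpha_j\mathbf{p}_j$, $\mathbf{r}_{j+1}=\mathbf{r}_j-\alpha_j\mathbf{A}\mathbf{p}_j$, $\beta_j=\mathbf{r}_{j+1}^\top\mathbf{r}_{j+1}/(\mathbf{r}_j^\top\mathbf{r}_j)$, $\mathbf{p}_{j+1}=\mathbf{r}_{j+1}+\beta_j\mathbf{p}_j$ (once the residual vanishes, subsequent iterates equal the exact solution). $\|\cdot\|$ is the Euclidean norm, and for a vector-valued random variable $X$, $\mathrm{Var}(X):=\mathbb{E}\|X-\mathbb{E}X\|^2$. *)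

theory Defs
  imports "HOL-Analysis.Analysis" "HOL-Probability.Probability"
begin

fun cg_state :: "real^'n^'n \<Rightarrow> real^'n \<Rightarrow> real^'n \<Rightarrow> nat \<Rightarrow> (real^'n) \<times> (real^'n) \<times> (real^'n)" where
  "cg_state A y x0 0 = (let r0 = y - A *v x0 in (x0, r0, r0))"
| "cg_state A y x0 (Suc j) =
     (let (x, r, p) = cg_state A y x0 j;
          \<alpha> = (r \<bullet> r) / (p \<bullet> (A *v p));
          x' = x + \<alpha> *\<^sub>R p;
          r' = r - \<alpha> *\<^sub>R (A *v p);
          \<beta> = (r' \<bullet> r') / (r \<bullet> r);
          p' = r' + \<beta> *\<^sub>R p
      in (x', r', p'))"

definition cg_iterate :: "real^'n^'n \<Rightarrow> real^'n \<Rightarrow> real^'n \<Rightarrow> nat \<Rightarrow> real^'n" where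
  "cg_iterate A y x0 j = fst (cg_state A y x0 j)"

definition cond2 :: "real^'n^'n \<Rightarrow> real" where
  "cond2 A = onorm (\<lambda>v. A *v v) * onorm (\<lambda>v. matrix_inv A *v v)"

end

theory Submission
  imports Defs
begin

(* CG minimises the A-norm of the error over the Krylov space, so the error after j steps is at
   most that of any polynomial p(A) x with p of degree j and p(0) = 1.  Take for p a rescaled
   Chebyshev polynomial of B = ((kappa + 1) I - 2 A / lambda_min) / (kappa - 1), whose A-numerical
   range lies in [-1, 1].  No eigendecomposition is needed: T_k(B) does not increase the A-norm
   because of the identity T_k^2 + (1 - t^2) U_(k-1)^2 = 1.  This gives
   ||x - x_j||_A <= 2 rho^j ||x||_A, and hence a bound of order kappa rho^(j-1) ||x|| on the
   increment x_j - x_(j-1).  The estimator is unbiased because its expectation telescopes, and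
   its variance is at most its second moment about x_(imin-1), which is the sum over j of
   ||x_j - x_(j-1)||^2 / P(Q = j). *)

fun cheb_poly :: "real \<Rightarrow> nat \<Rightarrow> real" where
  "cheb_poly s 0 = 1"
| "cheb_poly s (Suc 0) = s"
| "cheb_poly s (Suc (Suc k)) = 2 * s * cheb_poly s (Suc k) - cheb_poly s k"

lemma cheb_poly_closed_form:
  assumes "r > 0" and "2 * s = r + 1 / r"
  shows "cheb_poly s k = (r ^ k + (1 / r) ^ k) / 2"
proof (induction k rule: induct_nat_012)
  case 0
  then show ?case by simp
next
  case 1
  then show ?case using assms by simp
next
  case (ge2 k)
  have "r ^ Suc (Suc k) + (1 / r) ^ Suc (Suc k)
      = (r + 1 / r) * (r ^ Suc k + (1 / r) ^ Suc k) - (r ^ k + (1 / r) ^ k)"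
    using assms(1) by (simp add: field_simps)
  then show ?case using ge2 assms(2) by simp
qed

lemma cheb_poly_condition_bound:
  fixes \<kappa> :: real
  assumes "\<kappa> > 1"
  defines "\<rho> \<equiv> (sqrt \<kappa> - 1) / (sqrt \<kappa> + 1)"
  shows "cheb_poly ((\<kappa> + 1) / (\<kappa> - 1)) k > 0"
    and "1 / cheb_poly ((\<kappa> + 1) / (\<kappa> - 1)) k \<le> 2 * \<rho> ^ k"
proof -
  define s where "s = sqrt \<kappa>"
  have s_gt_1: "s > 1" and s_sq: "s\<^sup>2 = \<kappa>"
    using assms(1) by (simp_all add: s_def)
  have \<rho>_pos: "\<rho> > 0"
    unfolding \<rho>_def s_def[symmetric] using s_gt_1 by (intro divide_pos_pos) auto
  have "\<rho> + 1 / \<rho> = ((s - 1)\<^sup>2 + (s + 1)\<^sup>2) / (s\<^sup>2 - 1)"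
    unfolding \<rho>_def s_def[symmetric] using s_gt_1 by (simp add: field_simps power2_eq_square)
  also have "\<dots> = 2 * ((\<kappa> + 1) / (\<kappa> - 1))"
    unfolding s_sq[symmetric] by (simp add: power2_eq_square algebra_simps)
  finally have closed: "cheb_poly ((\<kappa> + 1) / (\<kappa> - 1)) k = (\<rho> ^ k + (1 / \<rho>) ^ k) / 2"
    using \<rho>_pos by (intro cheb_poly_closed_form) auto
  show pos: "cheb_poly ((\<kappa> + 1) / (\<kappa> - 1)) k > 0"
    unfolding closed using \<rho>_pos by (simp add: add_pos_pos)
  have "(1 / \<rho>) ^ k / 2 \<le> cheb_poly ((\<kappa> + 1) / (\<kappa> - 1)) k"
    unfolding closed using \<rho>_pos by simp
  then have "1 / cheb_poly ((\<kappa> + 1) / (\<kappa> - 1)) k \<le> 1 / ((1 / \<rho>) ^ k / 2)"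
    using \<rho>_pos pos by (intro divide_left_mono) auto
  also have "\<dots> = 2 * \<rho> ^ k"
    using \<rho>_pos by (simp add: power_one_over)
  finally show "1 / cheb_poly ((\<kappa> + 1) / (\<kappa> - 1)) k \<le> 2 * \<rho> ^ k" .
qed

section \<open>Symmetric positive definite matrices\<close>

locale spd_matrix =
  fixes A :: "real^'n^'n"
  assumes symmetric: "transpose A = A"
    and positive_definite: "\<And>v. v \<noteq> 0 \<Longrightarrow> v \<bullet> (A *v v) > 0"
begin

definition inner_A :: "real^'n \<Rightarrow> real^'n \<Rightarrow> real" where
  "inner_A u v = u \<bullet> (A *v v)"

abbreviation energy :: "real^'n \<Rightarrow> real" where
  "energy v \<equiv> inner_A v v"

definition norm_A :: real where
  "norm_A = onorm ((*v) A)"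

definition norm_inv_A :: real where
  "norm_inv_A = onorm ((*v) (matrix_inv A))"

lemma cond2_eq: "cond2 A = norm_A * norm_inv_A"
  by (simp add: cond2_def norm_A_def norm_inv_A_def)

lemma A_inner_commute: "(A *v u) \<bullet> v = u \<bullet> (A *v v)"
  by (metis dot_lmul_matrix symmetric vector_transpose_matrix)

lemma inner_A_commute: "inner_A u v = inner_A v u"
  by (metis A_inner_commute inner_A_def inner_commute)

lemma inner_A_add_left: "inner_A (u + v) w = inner_A u w + inner_A v w"
  by (simp add: inner_A_def inner_add_left)

lemma inner_A_add_right: "inner_A u (v + w) = inner_A u v + inner_A u w"
  by (simp add: inner_A_def inner_add_right matrix_vector_right_distrib)

lemma inner_A_diff_left: "inner_A (u - v) w = inner_A u w - inner_A v w"
  by (simp add: inner_A_def inner_diff_left)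

lemma inner_A_diff_right: "inner_A u (v - w) = inner_A u v - inner_A u w"
  by (simp add: inner_A_def inner_diff_right matrix_vector_mult_diff_distrib)

lemma energy_add: "energy (u + v) = energy u + 2 * inner_A u v + energy v"
  using inner_A_commute[of v u] by (simp add: inner_A_add_left inner_A_add_right)

lemma energy_diff: "energy (u - v) = energy u - 2 * inner_A u v + energy v"
  using inner_A_commute[of v u] by (simp add: inner_A_diff_left inner_A_diff_right)

lemma energy_scaleR: "energy (c *\<^sub>R v) = c\<^sup>2 * energy v"
  by (simp add: inner_A_def matrix_vector_mult_scaleR power2_eq_square)

lemma energy_pos: "v \<noteq> 0 \<Longrightarrow> energy v > 0"
  using positive_definite by (simp add: inner_A_def)

lemma energy_nonneg: "energy v \<ge> 0"
  using energy_pos[of v] by (cases "v = 0") (auto simp: inner_A_def)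

lemma inj_A: "inj ((*v) A)"
  unfolding vec.inj_iff_eq_0 using positive_definite by force

lemma A_matrix_inv_cancel: "A *v (matrix_inv A *v v) = v"
  and matrix_inv_A_cancel: "matrix_inv A *v (A *v v) = v"
proof -
  have "invertible A"
    using inj_A matrix_left_invertible_injective invertible_left_inverse by blast
  then have "A ** matrix_inv A = mat 1 \<and> matrix_inv A ** A = mat 1"
    unfolding invertible_def matrix_inv_def by (rule someI_ex)
  then show "A *v (matrix_inv A *v v) = v" "matrix_inv A *v (A *v v) = v"
    by (metis matrix_vector_mul_assoc matrix_vector_mul_lid)+
qed

lemma norm_A_nonneg: "norm_A \<ge> 0"
  unfolding norm_A_def by (simp add: onorm_pos_le matrix_vector_mul_bounded_linear)

lemma norm_inv_A_nonneg: "norm_inv_A \<ge> 0"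
  unfolding norm_inv_A_def by (simp add: onorm_pos_le matrix_vector_mul_bounded_linear)

lemma norm_A_mult_le: "norm (A *v v) \<le> norm_A * norm v"
  unfolding norm_A_def by (rule onorm[OF matrix_vector_mul_bounded_linear])

lemma norm_le_norm_inv_A: "norm v \<le> norm_inv_A * norm (A *v v)"
  using onorm[OF matrix_vector_mul_bounded_linear, of "matrix_inv A" "A *v v"]
  by (simp add: norm_inv_A_def matrix_inv_A_cancel)

lemma inner_A_Cauchy_Schwarz: "(inner_A u v)\<^sup>2 \<le> energy u * energy v"
proof (cases "v = 0")
  case True
  then show ?thesis by (simp add: inner_A_def)
next
  case False
  then have v_pos: "energy v > 0" by (rule energy_pos)
  define t where "t = inner_A u v / energy v"
  have "0 \<le> energy (u - t *\<^sub>R v)" by (rule energy_nonneg)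
  also have "\<dots> = energy u - 2 * t * inner_A u v + t\<^sup>2 * energy v"
    using inner_A_commute[of v u]
    by (simp add: inner_A_def matrix_vector_mult_diff_distrib matrix_vector_mult_scaleR
        inner_diff_left inner_diff_right power2_eq_square algebra_simps)
  also have "\<dots> = energy u - (inner_A u v)\<^sup>2 / energy v"
    using v_pos by (simp add: t_def field_simps power2_eq_square)
  finally show ?thesis using v_pos by (simp add: field_simps)
qed

lemma energy_le_norm_A: "energy v \<le> norm_A * (norm v)\<^sup>2"
proof -
  have "energy v \<le> norm v * norm (A *v v)"
    unfolding inner_A_def by (rule norm_cauchy_schwarz)
  also have "\<dots> \<le> norm v * (norm_A * norm v)"
    by (intro mult_left_mono norm_A_mult_le) simp
  finally show ?thesis by (simp add: power2_eq_square algebra_simps)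
qed

lemma energy_le_norm_inv_A: "energy v \<le> norm_inv_A * (norm (A *v v))\<^sup>2"
proof -
  have "energy v \<le> norm v * norm (A *v v)"
    unfolding inner_A_def by (rule norm_cauchy_schwarz)
  also have "\<dots> \<le> (norm_inv_A * norm (A *v v)) * norm (A *v v)"
    by (intro mult_right_mono norm_le_norm_inv_A) simp
  finally show ?thesis by (simp add: power2_eq_square algebra_simps)
qed

lemma sq_norm_le_energy_via_inner_A:
  assumes "(norm u)\<^sup>2 = inner_A w v" and "energy w \<le> c * (norm u)\<^sup>2" and "c \<ge> 0"
  shows "(norm u)\<^sup>2 \<le> c * energy v"
proof (cases "u = 0")
  case True
  then show ?thesis using assms(3) energy_nonneg[of v] by simp
next
  case False
  have "(norm u)\<^sup>2 * (norm u)\<^sup>2 = (inner_A w v)\<^sup>2"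
    using assms(1) by (simp add: power2_eq_square)
  also have "\<dots> \<le> energy w * energy v" by (rule inner_A_Cauchy_Schwarz)
  also have "\<dots> \<le> (c * (norm u)\<^sup>2) * energy v"
    by (intro mult_right_mono assms(2) energy_nonneg)
  also have "\<dots> = (norm u)\<^sup>2 * (c * energy v)"
    by (simp add: algebra_simps)
  finally have "(norm u)\<^sup>2 * (norm u)\<^sup>2 \<le> (norm u)\<^sup>2 * (c * energy v)" .
  moreover have "(norm u)\<^sup>2 > 0" using False by simp
  ultimately show ?thesis by (rule mult_le_cancel_left_pos[THEN iffD1, rotated])
qed

lemma norm_sq_le_energy: "(norm v)\<^sup>2 \<le> norm_inv_A * energy v"
proof (rule sq_norm_le_energy_via_inner_A)
  show "(norm v)\<^sup>2 = inner_A (matrix_inv A *v v) v"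
    by (simp add: inner_A_def power2_norm_eq_inner A_inner_commute[symmetric] A_matrix_inv_cancel)
  show "energy (matrix_inv A *v v) \<le> norm_inv_A * (norm v)\<^sup>2"
    using energy_le_norm_inv_A[of "matrix_inv A *v v"] by (simp add: A_matrix_inv_cancel)
qed (rule norm_inv_A_nonneg)

lemma norm_A_sq_le_energy: "(norm (A *v v))\<^sup>2 \<le> norm_A * energy v"
  by (rule sq_norm_le_energy_via_inner_A[OF _ energy_le_norm_A norm_A_nonneg])
    (simp add: inner_A_def power2_norm_eq_inner)

lemma cond2_ge_1: "cond2 A \<ge> 1"
proof -
  obtain i :: 'n where True by simp
  define v :: "real^'n" where "v = axis i 1"
  have v_pos: "(norm v)\<^sup>2 > 0" by (simp add: v_def axis_eq_0_iff)
  have "(norm v)\<^sup>2 \<le> norm_inv_A * energy v" by (rule norm_sq_le_energy)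
  also have "\<dots> \<le> norm_inv_A * (norm_A * (norm v)\<^sup>2)"
    by (intro mult_left_mono energy_le_norm_A norm_inv_A_nonneg)
  finally show ?thesis
    using v_pos by (simp add: cond2_eq algebra_simps)
qed

lemma norm_A_pos: "norm_A > 0"
  using cond2_ge_1 norm_A_nonneg by (auto simp: cond2_eq less_le)

section \<open>Chebyshev polynomials in A\<close>

definition shift_A :: "real \<Rightarrow> real \<Rightarrow> real^'n \<Rightarrow> real^'n" where
  "shift_A \<sigma> \<tau> v = \<sigma> *\<^sub>R v - \<tau> *\<^sub>R (A *v v)"

lemma shift_A_0: "shift_A \<sigma> \<tau> 0 = 0"
  by (simp add: shift_A_def)

lemma shift_A_add: "shift_A \<sigma> \<tau> (u + v) = shift_A \<sigma> \<tau> u + shift_A \<sigma> \<tau> v"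
  by (simp add: shift_A_def matrix_vector_right_distrib algebra_simps)

lemma shift_A_diff: "shift_A \<sigma> \<tau> (u - v) = shift_A \<sigma> \<tau> u - shift_A \<sigma> \<tau> v"
  by (simp add: shift_A_def matrix_vector_mult_diff_distrib algebra_simps)

lemma shift_A_self_adjoint: "inner_A u (shift_A \<sigma> \<tau> v) = inner_A (shift_A \<sigma> \<tau> u) v"
  using A_inner_commute[of u "A *v v"]
  by (simp add: inner_A_def shift_A_def matrix_vector_mult_diff_distrib matrix_vector_mult_scaleR
      inner_diff_left inner_diff_right)

lemma inner_A_shift_A: "inner_A v (shift_A \<sigma> \<tau> v) = \<sigma> * energy v - \<tau> * (norm (A *v v))\<^sup>2"
  using A_inner_commute[of v "A *v v"]
  by (simp add: inner_A_def shift_A_def matrix_vector_mult_diff_distrib matrix_vector_mult_scaleR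
      inner_diff_right power2_norm_eq_inner)

text \<open>Apply the hypothesis to u + B u and u - B u: both cross terms equal energy (B u).\<close>
lemma energy_shift_A_le:
  assumes "\<And>v. \<bar>inner_A v (shift_A \<sigma> \<tau> v)\<bar> \<le> energy v"
  shows "energy (shift_A \<sigma> \<tau> u) \<le> energy u"
proof -
  let ?B = "shift_A \<sigma> \<tau>"
  let ?v = "?B u"
  have "inner_A (u + ?v) (?B (u + ?v)) \<le> energy (u + ?v)"
    and "- inner_A (u - ?v) (?B (u - ?v)) \<le> energy (u - ?v)"
    using assms[of "u + ?v"] assms[of "u - ?v"] by simp_all
  moreover have "inner_A u (?B ?v) = energy ?v" and "inner_A ?v (?B u) = energy ?v"
    by (simp_all add: shift_A_self_adjoint)
  ultimately show ?thesis
    unfolding shift_A_add shift_A_diff energy_add energy_diff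
      inner_A_add_left inner_A_add_right inner_A_diff_left inner_A_diff_right
    by linarith
qed

text \<open>For B = shift_A \<sigma> \<tau>, cheb_vec \<sigma> \<tau> x k is T_k(B) x and cheb2_vec \<sigma> \<tau> x k is
  U_(k-1)(B) x, with T and U the Chebyshev polynomials of the first and second kind.\<close>
fun cheb_vec :: "real \<Rightarrow> real \<Rightarrow> real^'n \<Rightarrow> nat \<Rightarrow> real^'n" where
  "cheb_vec \<sigma> \<tau> x 0 = x"
| "cheb_vec \<sigma> \<tau> x (Suc 0) = shift_A \<sigma> \<tau> x"
| "cheb_vec \<sigma> \<tau> x (Suc (Suc k)) = 2 *\<^sub>R shift_A \<sigma> \<tau> (cheb_vec \<sigma> \<tau> x (Suc k)) - cheb_vec \<sigma> \<tau> x k"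

fun cheb2_vec :: "real \<Rightarrow> real \<Rightarrow> real^'n \<Rightarrow> nat \<Rightarrow> real^'n" where
  "cheb2_vec \<sigma> \<tau> x 0 = 0"
| "cheb2_vec \<sigma> \<tau> x (Suc k) = shift_A \<sigma> \<tau> (cheb2_vec \<sigma> \<tau> x k) + cheb_vec \<sigma> \<tau> x k"

lemma cheb_vec_Suc:
  "cheb_vec \<sigma> \<tau> x (Suc k) = shift_A \<sigma> \<tau> (cheb_vec \<sigma> \<tau> x k)
     - (cheb2_vec \<sigma> \<tau> x k - shift_A \<sigma> \<tau> (shift_A \<sigma> \<tau> (cheb2_vec \<sigma> \<tau> x k)))"
proof (induction k)
  case 0
  then show ?case by (simp add: shift_A_0)
next
  case (Suc k)
  let ?B = "shift_A \<sigma> \<tau>"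
  have "?B (cheb_vec \<sigma> \<tau> x (Suc k)) = ?B (?B (cheb_vec \<sigma> \<tau> x k)) - ?B (cheb2_vec \<sigma> \<tau> x k)
      + ?B (?B (?B (cheb2_vec \<sigma> \<tau> x k)))"
    unfolding Suc.IH by (simp add: shift_A_add shift_A_diff)
  then show ?case by (simp add: shift_A_add scaleR_2 algebra_simps)
qed

lemma energy_shift_A_rotation:
  fixes \<sigma> \<tau> :: real and t u :: "real^'n"
  defines "B \<equiv> shift_A \<sigma> \<tau>"
  shows "energy (B t - (u - B (B u))) + energy (B u + t) - energy (B (B u + t))
    = energy t + energy u - energy (B u)"
proof -
  have "energy (B t - (u - B (B u)))
      = energy (B t) - 2 * inner_A (B t) (u - B (B u)) + energy (u - B (B u))"
    by (rule energy_diff)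
  moreover have "energy (B u + t) = energy (B u) + 2 * inner_A (B u) t + energy t"
    by (rule energy_add)
  moreover have "energy (B (B u + t)) = energy (B (B u)) + 2 * inner_A (B (B u)) (B t) + energy (B t)"
    unfolding B_def shift_A_add by (rule energy_add)
  moreover have "energy (u - B (B u)) = energy u - 2 * inner_A u (B (B u)) + energy (B (B u))"
    by (rule energy_diff)
  moreover have "inner_A (B t) (u - B (B u)) = inner_A (B t) u - inner_A (B t) (B (B u))"
    by (rule inner_A_diff_right)
  moreover have "inner_A (B t) u = inner_A (B u) t"
    using shift_A_self_adjoint inner_A_commute unfolding B_def by metis
  moreover have "inner_A u (B (B u)) = energy (B u)"
    unfolding B_def by (rule shift_A_self_adjoint)
  moreover have "inner_A (B t) (B (B u)) = inner_A (B (B u)) (B t)"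
    by (rule inner_A_commute)
  ultimately show ?thesis by linarith
qed

text \<open>The vector form of T_k(t)^2 + (1 - t^2) U_(k-1)(t)^2 = 1.\<close>
lemma energy_cheb_identity:
  "energy (cheb_vec \<sigma> \<tau> x k) + energy (cheb2_vec \<sigma> \<tau> x k)
     - energy (shift_A \<sigma> \<tau> (cheb2_vec \<sigma> \<tau> x k)) = energy x"
proof (induction k)
  case 0
  then show ?case by (simp add: shift_A_0 inner_A_def)
next
  case (Suc k)
  then show ?case
    unfolding cheb_vec_Suc cheb2_vec.simps energy_shift_A_rotation by simp
qed

lemma energy_cheb_vec_le:
  assumes "\<And>v. \<bar>inner_A v (shift_A \<sigma> \<tau> v)\<bar> \<le> energy v"
  shows "energy (cheb_vec \<sigma> \<tau> x k) \<le> energy x"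
  using energy_cheb_identity[of \<sigma> \<tau> x k] energy_shift_A_le[OF assms, of "cheb2_vec \<sigma> \<tau> x k"]
  by linarith

section \<open>Krylov spaces and the conjugate gradient method\<close>

definition krylov :: "real^'n \<Rightarrow> nat \<Rightarrow> (real^'n) set" where
  "krylov y j = span ((\<lambda>i. ((*v) A ^^ i) y) ` {..<j})"

lemma krylov_mono: "k \<le> m \<Longrightarrow> krylov y k \<subseteq> krylov y m"
  unfolding krylov_def by (intro span_mono image_mono) auto

lemma in_krylov_Suc: "y \<in> krylov y (Suc k)"
  unfolding krylov_def by (rule span_base, rule image_eqI[of _ _ 0]) auto

lemma A_mult_krylov:
  assumes "w \<in> krylov y k"
  shows "A *v w \<in> krylov y (Suc k)"
proof -
  have "A *v w \<in> (*v) A ` krylov y k" using assms by blast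
  also have "\<dots> = span ((*v) A ` (\<lambda>i. ((*v) A ^^ i) y) ` {..<k})"
    unfolding krylov_def by (rule linear_span_image[OF matrix_vector_mul_linear, symmetric])
  also have "\<dots> \<subseteq> krylov y (Suc k)"
    unfolding krylov_def by (intro span_mono) (auto intro!: image_eqI[of _ _ "Suc _"])
  finally show ?thesis .
qed

lemma cheb_vec_sub_in_krylov:
  "cheb_vec \<sigma> \<tau> x k - cheb_poly \<sigma> k *\<^sub>R x \<in> krylov (A *v x) k"
proof (induction k rule: induct_nat_012)
  case 0
  then show ?case by (simp add: krylov_def span_zero)
next
  case 1
  have "(- \<tau>) *\<^sub>R (A *v x) \<in> krylov (A *v x) (Suc 0)"
    using in_krylov_Suc unfolding krylov_def by (rule span_scale)
  then show ?case by (simp add: shift_A_def)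
next
  case (ge2 k)
  let ?w1 = "cheb_vec \<sigma> \<tau> x (Suc k) - cheb_poly \<sigma> (Suc k) *\<^sub>R x"
  let ?w0 = "cheb_vec \<sigma> \<tau> x k - cheb_poly \<sigma> k *\<^sub>R x"
  let ?K = "krylov (A *v x) (Suc (Suc k))"
  have "?w1 \<in> ?K" and "?w0 \<in> ?K"
    using ge2 krylov_mono[of "Suc k" "Suc (Suc k)"] krylov_mono[of k "Suc (Suc k)"] by auto
  moreover have "A *v ?w1 \<in> ?K" and "A *v x \<in> ?K"
    using A_mult_krylov[OF ge2(2)] in_krylov_Suc by auto
  moreover have "cheb_vec \<sigma> \<tau> x (Suc (Suc k)) - cheb_poly \<sigma> (Suc (Suc k)) *\<^sub>R x
      = (2 * \<sigma>) *\<^sub>R ?w1 - (2 * \<tau>) *\<^sub>R (A *v ?w1) - (2 * \<tau> * cheb_poly \<sigma> (Suc k)) *\<^sub>R (A *v x) - ?w0"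
    by (simp add: shift_A_def matrix_vector_mult_diff_distrib matrix_vector_mult_scaleR
        algebra_simps scaleR_2)
  ultimately show ?case
    unfolding krylov_def by (metis span_diff span_scale)
qed

abbreviation cg_x :: "real^'n \<Rightarrow> nat \<Rightarrow> real^'n" where
  "cg_x y j \<equiv> cg_iterate A y 0 j"

definition cg_res :: "real^'n \<Rightarrow> nat \<Rightarrow> real^'n" where
  "cg_res y j = fst (snd (cg_state A y 0 j))"

definition cg_dir :: "real^'n \<Rightarrow> nat \<Rightarrow> real^'n" where
  "cg_dir y j = snd (snd (cg_state A y 0 j))"

definition cg_step :: "real^'n \<Rightarrow> nat \<Rightarrow> real" where
  "cg_step y j = (cg_res y j \<bullet> cg_res y j) / (cg_dir y j \<bullet> (A *v cg_dir y j))"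

lemma cg_0: "cg_x y 0 = 0" "cg_res y 0 = y" "cg_dir y 0 = y"
  by (simp_all add: cg_res_def cg_dir_def cg_iterate_def)

lemma cg_Suc:
  "cg_x y (Suc j) = cg_x y j + cg_step y j *\<^sub>R cg_dir y j"
  "cg_res y (Suc j) = cg_res y j - cg_step y j *\<^sub>R (A *v cg_dir y j)"
  "cg_dir y (Suc j) = cg_res y (Suc j)
     + ((cg_res y (Suc j) \<bullet> cg_res y (Suc j)) / (cg_res y j \<bullet> cg_res y j)) *\<^sub>R cg_dir y j"
proof -
  obtain x r p where "cg_state A y 0 j = (x, r, p)" by (metis prod_cases3)
  then show "cg_x y (Suc j) = cg_x y j + cg_step y j *\<^sub>R cg_dir y j"
    and "cg_res y (Suc j) = cg_res y j - cg_step y j *\<^sub>R (A *v cg_dir y j)"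
    and "cg_dir y (Suc j) = cg_res y (Suc j)
      + ((cg_res y (Suc j) \<bullet> cg_res y (Suc j)) / (cg_res y j \<bullet> cg_res y j)) *\<^sub>R cg_dir y j"
    by (simp_all add: cg_res_def cg_dir_def cg_step_def cg_iterate_def Let_def)
qed

lemma cg_res_eq: "cg_res y j = y - A *v cg_x y j"
  by (induction j) (simp_all add: cg_0 cg_Suc matrix_vector_right_distrib matrix_vector_mult_scaleR)

lemma cg_res_eq_0_mono: "cg_res y i = 0 \<Longrightarrow> i \<le> j \<Longrightarrow> cg_res y j = 0"
  by (induction j) (auto simp: le_Suc_eq cg_Suc cg_step_def)

lemma cg_res_inner_dir: "cg_res y j \<bullet> cg_dir y j = cg_res y j \<bullet> cg_res y j"
  and cg_res_Suc_inner_dir: "cg_res y (Suc j) \<bullet> cg_dir y j = 0"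
proof -
  have step: "cg_res y (Suc j) \<bullet> cg_dir y j = 0"
    if "cg_res y j \<bullet> cg_dir y j = cg_res y j \<bullet> cg_res y j" for j
  proof (cases "cg_dir y j = 0")
    case True
    then show ?thesis by (simp add: cg_Suc)
  next
    case False
    then have "cg_dir y j \<bullet> (A *v cg_dir y j) \<noteq> 0"
      using energy_pos[OF False] by (simp add: inner_A_def)
    then show ?thesis
      using that by (simp add: cg_Suc cg_step_def inner_diff_left A_inner_commute)
  qed
  have "cg_res y j \<bullet> cg_dir y j = cg_res y j \<bullet> cg_res y j" for j
  proof (induction j)
    case 0
    then show ?case by (simp add: cg_0)
  next
    case (Suc j)
    then show ?case
      using step by (subst (1) cg_Suc(3)) (simp add: inner_add_right)
  qed
  then show "cg_res y j \<bullet> cg_dir y j = cg_res y j \<bullet> cg_res y j"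
    and "cg_res y (Suc j) \<bullet> cg_dir y j = 0"
    using step by blast+
qed

lemma span_cg_dir_mono: "a \<le> b \<Longrightarrow> span (cg_dir y ` {..<a}) \<subseteq> span (cg_dir y ` {..<b})"
  by (intro span_mono image_mono) auto

lemma cg_res_in_span: "cg_res y k \<in> span (cg_dir y ` {..<Suc k})"
proof (cases k)
  case 0
  then show ?thesis by (simp add: cg_0 span_base)
next
  case (Suc m)
  have "cg_dir y (Suc m) \<in> span (cg_dir y ` {..<Suc (Suc m)})"
    and "cg_dir y m \<in> span (cg_dir y ` {..<Suc (Suc m)})"
    by (auto intro: span_base)
  then have "cg_dir y (Suc m) - ((cg_res y (Suc m) \<bullet> cg_res y (Suc m)) / (cg_res y m \<bullet> cg_res y m))
      *\<^sub>R cg_dir y m \<in> span (cg_dir y ` {..<Suc (Suc m)})"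
    by (intro span_diff span_scale)
  then show ?thesis unfolding Suc by (simp add: cg_Suc(3)[of y m])
qed

lemma cg_step_pos:
  assumes "cg_res y i \<noteq> 0"
  shows "cg_step y i > 0" and "cg_dir y i \<bullet> (A *v cg_dir y i) > 0"
proof -
  have "cg_dir y i \<noteq> 0" using cg_res_inner_dir[of y i] assms by auto
  then show dir_pos: "cg_dir y i \<bullet> (A *v cg_dir y i) > 0" by (rule positive_definite)
  show "cg_step y i > 0" unfolding cg_step_def using assms dir_pos by simp
qed

lemma A_cg_dir_eq:
  assumes "cg_res y i \<noteq> 0"
  shows "A *v cg_dir y i = (1 / cg_step y i) *\<^sub>R (cg_res y i - cg_res y (Suc i))"
  using cg_step_pos[OF assms] by (simp add: cg_Suc(2))

lemma A_cg_dir_in_span: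
  assumes "cg_res y i \<noteq> 0"
  shows "A *v cg_dir y i \<in> span (cg_dir y ` {..<Suc (Suc i)})"
proof -
  have "cg_res y i \<in> span (cg_dir y ` {..<Suc (Suc i)})"
    using cg_res_in_span span_cg_dir_mono[of "Suc i" "Suc (Suc i)"] by auto
  with cg_res_in_span show ?thesis
    unfolding A_cg_dir_eq[OF assms] by (intro span_scale span_diff)
qed

lemma inner_span_cg_dir_eq_0:
  assumes "\<forall>i<j. v \<bullet> cg_dir y i = 0" and "w \<in> span (cg_dir y ` {..<j})"
  shows "v \<bullet> w = 0"
  using orthogonal_to_span[OF assms(2), of v] assms(1) unfolding orthogonal_def by auto

lemma cg_orthogonality:
  "(\<forall>i<j. cg_res y i \<noteq> 0) \<Longrightarrow>
     (\<forall>i<j. cg_res y j \<bullet> cg_dir y i = 0) \<and> (\<forall>i<j. cg_dir y j \<bullet> (A *v cg_dir y i) = 0)"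
proof (induction j)
  case 0
  then show ?case by simp
next
  case (Suc j)
  have nonzero: "\<forall>i<j. cg_res y i \<noteq> 0" and res_j: "cg_res y j \<noteq> 0"
    using Suc.prems by auto
  note IH = Suc.IH[OF nonzero]
  let ?a = "cg_step y j" and ?r = "cg_res y j" and ?p = "cg_dir y j" and ?r' = "cg_res y (Suc j)"
  have res: "\<forall>i<Suc j. ?r' \<bullet> cg_dir y i = 0"
  proof (intro allI impI)
    fix i assume "i < Suc j"
    then consider "i = j" | "i < j" by linarith
    then show "?r' \<bullet> cg_dir y i = 0"
    proof cases
      case 1
      then show ?thesis using cg_res_Suc_inner_dir by simp
    next
      case 2
      then have "?r \<bullet> cg_dir y i = 0" "?p \<bullet> (A *v cg_dir y i) = 0" using IH by auto
      then show ?thesis by (simp add: cg_Suc(2) inner_diff_left A_inner_commute)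
    qed
  qed
  have dir: "\<forall>i<Suc j. cg_dir y (Suc j) \<bullet> (A *v cg_dir y i) = 0"
  proof (intro allI impI)
    fix i assume "i < Suc j"
    then consider "i < j" | "i = j" by linarith
    then show "cg_dir y (Suc j) \<bullet> (A *v cg_dir y i) = 0"
    proof cases
      case 1
      then have "A *v cg_dir y i \<in> span (cg_dir y ` {..<Suc j})"
        using A_cg_dir_in_span[of y i] nonzero span_cg_dir_mono[of "Suc (Suc i)" "Suc j"] by auto
      then have "?r' \<bullet> (A *v cg_dir y i) = 0" by (rule inner_span_cg_dir_eq_0[OF res])
      moreover have "?p \<bullet> (A *v cg_dir y i) = 0" using IH 1 by auto
      ultimately show ?thesis by (simp add: cg_Suc(3)[of y j] inner_add_left)
    next
      case 2
      have pos: "?a > 0" "?p \<bullet> (A *v ?p) > 0" "?r \<bullet> ?r > 0"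
        using cg_step_pos[OF res_j] res_j by auto
      have "?r' \<bullet> ?r = 0" using inner_span_cg_dir_eq_0[OF res cg_res_in_span] .
      then have r'_Ap: "?r' \<bullet> (A *v ?p) = - (?r' \<bullet> ?r') / ?a"
        unfolding A_cg_dir_eq[OF res_j] by (simp add: inner_diff_right)
      have p_Ap: "?p \<bullet> (A *v ?p) = (?r \<bullet> ?r) / ?a"
        using pos unfolding cg_step_def by (simp add: field_simps)
      show ?thesis
        unfolding 2 cg_Suc(3)[of y j] using pos by (simp add: inner_add_left r'_Ap p_Ap field_simps)
    qed
  qed
  show ?case using res dir by blast
qed

lemma cg_x_in_span: "cg_x y j \<in> span (cg_dir y ` {..<j})"
proof (induction j)
  case 0
  then show ?case by (simp add: cg_0 span_zero)
next
  case (Suc j)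
  then have "cg_x y j \<in> span (cg_dir y ` {..<Suc j})"
    using span_cg_dir_mono[of j "Suc j"] by auto
  moreover have "cg_dir y j \<in> span (cg_dir y ` {..<Suc j})" by (rule span_base) auto
  ultimately show ?case unfolding cg_Suc by (intro span_add span_scale)
qed

lemma A_mult_span_cg_dir:
  assumes "\<forall>i<m. cg_res y i \<noteq> 0" and "w \<in> span (cg_dir y ` {..<m})"
  shows "A *v w \<in> span (cg_dir y ` {..<Suc m})"
proof -
  have "A *v w \<in> (*v) A ` span (cg_dir y ` {..<m})" using assms(2) by blast
  also have "\<dots> = span ((*v) A ` cg_dir y ` {..<m})"
    by (rule linear_span_image[OF matrix_vector_mul_linear, symmetric])
  also have "\<dots> \<subseteq> span (cg_dir y ` {..<Suc m})"
  proof (rule span_minimal[OF _ subspace_span], rule image_subsetI)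
    fix z assume "z \<in> cg_dir y ` {..<m}"
    then obtain i where i: "i < m" "z = cg_dir y i" by auto
    then show "A *v z \<in> span (cg_dir y ` {..<Suc m})"
      using A_cg_dir_in_span[of y i] assms(1) span_cg_dir_mono[of "Suc (Suc i)" "Suc m"] by auto
  qed
  finally show ?thesis .
qed

lemma krylov_subset_span_cg_dir:
  assumes "\<forall>i<j. cg_res y i \<noteq> 0"
  shows "krylov y j \<subseteq> span (cg_dir y ` {..<j})"
proof -
  have "((*v) A ^^ i) y \<in> span (cg_dir y ` {..<Suc i})" if "i < j" for i
    using that
  proof (induction i)
    case 0
    then show ?case by (simp add: cg_0 span_base)
  next
    case (Suc i)
    then show ?case using A_mult_span_cg_dir[of "Suc i" y] assms by simp
  qed
  then show ?thesis
    unfolding krylov_def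
  proof (intro span_minimal[OF _ subspace_span] image_subsetI)
    fix i assume "i \<in> {..<j}"
    then show "((*v) A ^^ i) y \<in> span (cg_dir y ` {..<j})"
      using \<open>i < j \<Longrightarrow> _\<close> span_cg_dir_mono[of "Suc i" j] by auto
  qed
qed

lemma cg_energy_optimal:
  assumes Ax: "A *v x = y" and z: "z \<in> krylov y j"
  shows "energy (x - cg_x y j) \<le> energy (x - z)"
proof (cases "\<forall>i<j. cg_res y i \<noteq> 0")
  case True
  let ?e = "x - cg_x y j" and ?w = "cg_x y j - z"
  have "?w \<in> span (cg_dir y ` {..<j})"
    using cg_x_in_span krylov_subset_span_cg_dir[OF True] z by (intro span_diff) auto
  moreover have "A *v ?e = cg_res y j"
    by (simp add: cg_res_eq Ax matrix_vector_mult_diff_distrib)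
  moreover have "\<forall>i<j. cg_res y j \<bullet> cg_dir y i = 0"
    using cg_orthogonality[OF True] by blast
  ultimately have "(A *v ?e) \<bullet> ?w = 0"
    using inner_span_cg_dir_eq_0 by simp
  then have "inner_A ?e ?w = 0"
    by (simp add: inner_A_def A_inner_commute)
  then show ?thesis
    using energy_add[of ?e ?w] energy_nonneg[of ?w] by simp
next
  case False
  then have "cg_res y j = 0" using cg_res_eq_0_mono by auto
  then have "A *v (x - cg_x y j) = 0"
    by (simp add: cg_res_eq Ax matrix_vector_mult_diff_distrib)
  then have "x - cg_x y j = 0" using inj_A unfolding vec.inj_iff_eq_0 by blast
  then show ?thesis using energy_nonneg by (simp add: inner_A_def)
qed

section \<open>Convergence bounds\<close>

definition rho :: real where
  "rho = (sqrt (cond2 A) - 1) / (sqrt (cond2 A) + 1)"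

lemma rho_nonneg: "rho \<ge> 0" and rho_less_1: "rho < 1"
proof -
  have "0 \<le> (s - 1) / (s + 1) \<and> (s - 1) / (s + 1) < 1" if "s \<ge> 1" for s :: real
    using that by (auto simp: divide_less_eq)
  moreover have "sqrt (cond2 A) \<ge> 1" using cond2_ge_1 by simp
  ultimately show "rho \<ge> 0" "rho < 1" unfolding rho_def by blast+
qed

text \<open>The shift maps the spectrum of A, which lies in [1 / norm_inv_A, norm_A], onto [-1, 1].\<close>
lemma inner_A_cheb_shift_le:
  assumes "cond2 A > 1"
  shows "\<bar>inner_A v (shift_A ((cond2 A + 1) / (cond2 A - 1)) (2 * norm_inv_A / (cond2 A - 1)) v)\<bar>
    \<le> energy v"
proof -
  let ?\<kappa> = "cond2 A" and ?w = "(norm (A *v v))\<^sup>2"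
  have lower: "energy v \<le> norm_inv_A * ?w" by (rule energy_le_norm_inv_A)
  have upper: "norm_inv_A * ?w \<le> ?\<kappa> * energy v"
    using mult_left_mono[OF norm_A_sq_le_energy[of v] norm_inv_A_nonneg]
    by (simp add: cond2_eq algebra_simps)
  have "inner_A v (shift_A ((?\<kappa> + 1) / (?\<kappa> - 1)) (2 * norm_inv_A / (?\<kappa> - 1)) v)
      = ((?\<kappa> + 1) * energy v - 2 * (norm_inv_A * ?w)) / (?\<kappa> - 1)"
    unfolding inner_A_shift_A by (simp add: diff_divide_distrib mult.assoc)
  moreover have "\<bar>(?\<kappa> + 1) * energy v - 2 * (norm_inv_A * ?w)\<bar> \<le> (?\<kappa> - 1) * energy v"
    using lower upper by (simp add: abs_le_iff algebra_simps)
  ultimately show ?thesis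
    using assms by (simp add: divide_le_eq mult.commute)
qed

lemma cg_energy_error_le_cond2_gt_1:
  assumes Ax: "A *v x = y" and "cond2 A > 1"
  shows "energy (x - cg_x y j) \<le> 4 * rho ^ (2 * j) * energy x"
proof -
  let ?\<sigma> = "(cond2 A + 1) / (cond2 A - 1)" and ?\<tau> = "2 * norm_inv_A / (cond2 A - 1)"
  let ?T = "cheb_vec ?\<sigma> ?\<tau> x j"
  define c where "c = cheb_poly ?\<sigma> j"
  have c_pos: "c > 0" and c_inv: "1 / c \<le> 2 * rho ^ j"
    using cheb_poly_condition_bound[OF assms(2)] by (simp_all add: c_def rho_def)
  have "(- (1 / c)) *\<^sub>R (?T - c *\<^sub>R x) \<in> krylov y j"
    using cheb_vec_sub_in_krylov[of ?\<sigma> ?\<tau> x j] unfolding c_def Ax krylov_def by (rule span_scale)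
  then have "x - (1 / c) *\<^sub>R ?T \<in> krylov y j"
    using c_pos by (simp add: algebra_simps)
  then have "energy (x - cg_x y j) \<le> energy ((1 / c) *\<^sub>R ?T)"
    using cg_energy_optimal[OF Ax] by fastforce
  also have "\<dots> = (1 / c)\<^sup>2 * energy ?T" by (rule energy_scaleR)
  also have "\<dots> \<le> (2 * rho ^ j)\<^sup>2 * energy x"
    using c_pos c_inv energy_cheb_vec_le[OF inner_A_cheb_shift_le[OF assms(2)]] energy_nonneg
    by (intro mult_mono power_mono) auto
  also have "\<dots> = 4 * rho ^ (2 * j) * energy x"
    by (simp add: power_mult_distrib power_even_eq)
  finally show ?thesis .
qed

lemma A_mult_eq_norm_A_if_cond2_eq_1:
  assumes "cond2 A = 1"
  shows "A *v v = norm_A *\<^sub>R v"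
proof -
  have "(norm (A *v v - norm_A *\<^sub>R v))\<^sup>2
      = (norm (A *v v))\<^sup>2 - 2 * norm_A * energy v + norm_A\<^sup>2 * (norm v)\<^sup>2"
    unfolding power2_norm_eq_inner inner_A_def
    by (simp add: inner_diff_left inner_diff_right A_inner_commute inner_commute power2_eq_square)
  also have "\<dots> \<le> norm_A * energy v - 2 * norm_A * energy v + norm_A\<^sup>2 * (norm_inv_A * energy v)"
    using norm_A_sq_le_energy[of v] mult_left_mono[OF norm_sq_le_energy[of v], of "norm_A\<^sup>2"] by simp
  also have "\<dots> = norm_A * energy v * (cond2 A - 1)"
    by (simp add: cond2_eq algebra_simps power2_eq_square)
  finally show ?thesis using assms by simp
qed

text \<open>The Chebyshev shift is undefined for cond2 A = 1; then A is a multiple of the identity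
  and CG is exact after one step, matching rho = 0.\<close>
lemma cg_energy_error_le:
  assumes Ax: "A *v x = y"
  shows "energy (x - cg_x y j) \<le> 4 * rho ^ (2 * j) * energy x"
proof (cases "cond2 A > 1")
  case True
  then show ?thesis by (rule cg_energy_error_le_cond2_gt_1[OF Ax])
next
  case False
  then have cond: "cond2 A = 1" using cond2_ge_1 by simp
  show ?thesis
  proof (cases j)
    case 0
    then show ?thesis using energy_nonneg[of x] by (simp add: cg_0)
  next
    case (Suc m)
    have "x = (1 / norm_A) *\<^sub>R y"
      using A_mult_eq_norm_A_if_cond2_eq_1[OF cond, of x] Ax norm_A_pos by auto
    moreover have "(1 / norm_A) *\<^sub>R y \<in> krylov y j"
      using in_krylov_Suc[of y m] unfolding Suc krylov_def by (rule span_scale)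
    ultimately have "energy (x - cg_x y j) \<le> energy (x - x)"
      using cg_energy_optimal[OF Ax] by metis
    then show ?thesis using Suc cond by (simp add: inner_A_def rho_def)
  qed
qed

lemma cg_error_le:
  assumes "A *v x = y"
  shows "(norm (x - cg_x y j))\<^sup>2 \<le> 4 * cond2 A * rho ^ (2 * j) * (norm x)\<^sup>2"
proof -
  have "(norm (x - cg_x y j))\<^sup>2 \<le> norm_inv_A * energy (x - cg_x y j)"
    by (rule norm_sq_le_energy)
  also have "\<dots> \<le> norm_inv_A * (4 * rho ^ (2 * j) * energy x)"
    by (intro mult_left_mono cg_energy_error_le[OF assms] norm_inv_A_nonneg)
  also have "\<dots> \<le> norm_inv_A * (4 * rho ^ (2 * j) * (norm_A * (norm x)\<^sup>2))"
    using rho_nonneg by (intro mult_left_mono energy_le_norm_A norm_inv_A_nonneg) auto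
  also have "\<dots> = 4 * cond2 A * rho ^ (2 * j) * (norm x)\<^sup>2"
    by (simp add: cond2_eq algebra_simps)
  finally show ?thesis .
qed

lemma cg_increment_le:
  assumes "A *v x = y" and "j \<ge> 1"
  shows "(norm (cg_x y j - cg_x y (j - 1)))\<^sup>2 \<le> 16 * (cond2 A)\<^sup>2 * (norm x)\<^sup>2 * rho ^ (2 * (j - 1))"
proof -
  let ?a = "x - cg_x y (j - 1)" and ?b = "x - cg_x y j"
  have "(norm (cg_x y j - cg_x y (j - 1)))\<^sup>2 \<le> (norm ?a + norm ?b)\<^sup>2"
    using norm_triangle_ineq4[of ?a ?b] by (simp add: power_mono)
  also have "\<dots> \<le> 2 * (norm ?a)\<^sup>2 + 2 * (norm ?b)\<^sup>2"
    using zero_le_power2[of "norm ?a - norm ?b"] unfolding power2_sum power2_diff by linarith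
  also have "\<dots> \<le> 8 * cond2 A * (norm x)\<^sup>2 * (rho ^ (2 * (j - 1)) + rho ^ (2 * j))"
    using cg_error_le[OF assms(1), of "j - 1"] cg_error_le[OF assms(1), of j] by (simp add: algebra_simps)
  also have "\<dots> \<le> 8 * cond2 A * (norm x)\<^sup>2 * (2 * rho ^ (2 * (j - 1)))"
  proof -
    have "rho ^ (2 * j) \<le> rho ^ (2 * (j - 1))"
      using rho_nonneg rho_less_1 by (intro power_decreasing) auto
    then show ?thesis using cond2_ge_1 by (intro mult_left_mono) auto
  qed
  also have "\<dots> = 16 * cond2 A * ((norm x)\<^sup>2 * rho ^ (2 * (j - 1)))"
    by simp
  also have "\<dots> \<le> 16 * (cond2 A)\<^sup>2 * ((norm x)\<^sup>2 * rho ^ (2 * (j - 1)))"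
  proof -
    have "cond2 A * 1 \<le> cond2 A * cond2 A"
      using cond2_ge_1 by (intro mult_left_mono) auto
    then show ?thesis
      using rho_nonneg by (intro mult_right_mono mult_left_mono) (auto simp: power2_eq_square)
  qed
  finally show ?thesis by simp
qed

end

section \<open>The telescoping estimator\<close>

lemma sum_diff_pred_telescope:
  fixes f :: "nat \<Rightarrow> 'a::ab_group_add"
  assumes "1 \<le> a" and "a \<le> b"
  shows "(\<Sum>j=a..b. f j - f (j - 1)) = f b - f (a - 1)"
proof -
  obtain m where m: "a = Suc m" using assms(1) by (cases a) auto
  obtain n where n: "b = Suc n" using assms by (cases b) auto
  have "(\<Sum>j=Suc m..Suc n. f j - f (j - 1)) = (\<Sum>i=m..n. f (Suc i) - f i)"
    by (subst sum.shift_bounds_cl_Suc_ivl) simp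
  also have "\<dots> = f (Suc n) - f m"
    using assms m n by (intro sum_Suc_diff) simp
  finally show ?thesis using m n by simp
qed

lemma weighted_sum_sq_dist_mean_le:
  fixes v :: "'i \<Rightarrow> 'a::real_inner"
  assumes "finite S" and "sum p S = 1" and "m = (\<Sum>j\<in>S. p j *\<^sub>R v j)"
  shows "(\<Sum>j\<in>S. p j * (norm (v j - m))\<^sup>2) \<le> (\<Sum>j\<in>S. p j * (norm (v j - c))\<^sup>2)"
proof -
  have split: "(norm (v j - c))\<^sup>2 = (norm (v j - m))\<^sup>2 + 2 * ((v j - m) \<bullet> (m - c)) + (norm (m - c))\<^sup>2"
    for j
    using dot_norm[of "v j - m" "m - c"] by simp
  have "(\<Sum>j\<in>S. p j * ((v j - m) \<bullet> (m - c))) = (\<Sum>j\<in>S. p j *\<^sub>R (v j - m)) \<bullet> (m - c)"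
    by (simp add: inner_sum_left)
  also have "(\<Sum>j\<in>S. p j *\<^sub>R (v j - m)) = 0"
    using assms(2,3) by (simp add: scaleR_right_diff_distrib sum_subtractf scaleR_sum_left[symmetric])
  finally have cross: "(\<Sum>j\<in>S. p j * ((v j - m) \<bullet> (m - c))) = 0"
    by simp
  have "(\<Sum>j\<in>S. p j * (norm (v j - c))\<^sup>2)
      = (\<Sum>j\<in>S. p j * (norm (v j - m))\<^sup>2) + 2 * (\<Sum>j\<in>S. p j * ((v j - m) \<bullet> (m - c)))
        + (\<Sum>j\<in>S. p j) * (norm (m - c))\<^sup>2"
  proof -
    have "p j * (norm (v j - c))\<^sup>2 = p j * (norm (v j - m))\<^sup>2
        + 2 * (p j * ((v j - m) \<bullet> (m - c))) + p j * (norm (m - c))\<^sup>2" for j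
      unfolding split by (simp only: distrib_left mult.left_commute)
    then show ?thesis
      by (simp only: sum.distrib sum_distrib_left[symmetric] sum_distrib_right[symmetric])
  qed
  then show ?thesis using cross assms(2) by simp
qed

lemma expectation_telescoping_estimator:
  fixes f :: "nat \<Rightarrow> 'a::euclidean_space" and Q :: "nat pmf"
  assumes "1 \<le> a" and "a \<le> b" and "set_pmf Q \<subseteq> {a..b}" and "\<forall>j\<in>{a..b}. pmf Q j > 0"
  shows "measure_pmf.expectation Q (\<lambda>j. (1 / pmf Q j) *\<^sub>R (f j - f (j - 1)) + f (a - 1)) = f b"
proof -
  have pmf_nonzero: "j \<in> {a..b} \<Longrightarrow> pmf Q j \<noteq> 0" for j
    using assms(4) by (metis less_irrefl)
  have "measure_pmf.expectation Q (\<lambda>j. (1 / pmf Q j) *\<^sub>R (f j - f (j - 1)) + f (a - 1))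
      = (\<Sum>j=a..b. pmf Q j *\<^sub>R ((1 / pmf Q j) *\<^sub>R (f j - f (j - 1)) + f (a - 1)))"
    using assms(3) by (intro integral_measure_pmf) auto
  also have "\<dots> = (\<Sum>j=a..b. (f j - f (j - 1)) + pmf Q j *\<^sub>R f (a - 1))"
    using pmf_nonzero by (intro sum.cong) (auto simp: scaleR_add_right)
  also have "\<dots> = f b - f (a - 1) + (\<Sum>j=a..b. pmf Q j) *\<^sub>R f (a - 1)"
    using sum_diff_pred_telescope[OF assms(1,2), of f] by (simp add: sum.distrib scaleR_sum_left)
  also have "\<dots> = f b"
    using assms(3) by (simp add: sum_pmf_eq_1)
  finally show ?thesis .
qed

text \<open>The variance is at most the second moment about the constant f (a - 1).\<close>
lemma variance_telescoping_estimator_le: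
  fixes f :: "nat \<Rightarrow> 'a::euclidean_space" and Q :: "nat pmf"
  assumes "set_pmf Q \<subseteq> {a..b}" and "\<forall>j\<in>{a..b}. pmf Q j > 0"
  defines "X \<equiv> \<lambda>j. (1 / pmf Q j) *\<^sub>R (f j - f (j - 1)) + f (a - 1)"
  shows "measure_pmf.expectation Q (\<lambda>j. (norm (X j - measure_pmf.expectation Q X))\<^sup>2)
    \<le> (\<Sum>j=a..b. (norm (f j - f (j - 1)))\<^sup>2 / pmf Q j)"
proof -
  have pmf_nonzero: "j \<in> {a..b} \<Longrightarrow> pmf Q j \<noteq> 0" for j
    using assms(2) by (metis less_irrefl)
  have mean: "measure_pmf.expectation Q X = (\<Sum>j=a..b. pmf Q j *\<^sub>R X j)"
    using assms(1) by (intro integral_measure_pmf) auto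
  have "measure_pmf.expectation Q (\<lambda>j. (norm (X j - measure_pmf.expectation Q X))\<^sup>2)
      = (\<Sum>j=a..b. pmf Q j * (norm (X j - measure_pmf.expectation Q X))\<^sup>2)"
    using assms(1) by (subst integral_measure_pmf_real[of "{a..b}"]) (auto simp: mult.commute)
  also have "\<dots> \<le> (\<Sum>j=a..b. pmf Q j * (norm (X j - f (a - 1)))\<^sup>2)"
    using assms(1) mean by (intro weighted_sum_sq_dist_mean_le) (auto simp: sum_pmf_eq_1)
  also have "\<dots> = (\<Sum>j=a..b. (norm (f j - f (j - 1)))\<^sup>2 / pmf Q j)"
    using pmf_nonzero by (intro sum.cong) (auto simp: X_def power_divide power2_eq_square)
  finally show ?thesis .
qed

theorem theorem3p2:
  fixes A :: "real^'n^'n" and y :: "real^'n" and Q :: "nat pmf" and imin imax :: nat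
  assumes symm: "transpose A = A"
    and posdef: "\<forall>v. v \<noteq> 0 \<longrightarrow> v \<bullet> (A *v v) > 0"
    and "1 \<le> imin" and "imin < imax" and "imax \<le> CARD('n)"
    and supp: "set_pmf Q \<subseteq> {imin..imax}"
    and pos: "\<forall>j\<in>{imin..imax}. pmf Q j > 0"
  defines "x \<equiv> matrix_inv A *v y"
    and "xtss \<equiv> (\<lambda>j. (1 / pmf Q j) *\<^sub>R (cg_iterate A y 0 j - cg_iterate A y 0 (j - 1))
                           + cg_iterate A y 0 (imin - 1))"
    and "\<rho> \<equiv> (sqrt (cond2 A) - 1) / (sqrt (cond2 A) + 1)"
  shows "measure_pmf.expectation Q xtss = cg_iterate A y 0 imax
    \<and> measure_pmf.expectation Q (\<lambda>j. (norm (xtss j - measure_pmf.expectation Q xtss))\<^sup>2)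
        \<le> 16 * (cond2 A)\<^sup>2 * (norm x)\<^sup>2 * (\<Sum>j=imin..imax. \<rho> ^ (2 * (j - 1)) / pmf Q j)"
proof -
  interpret spd_matrix A
    using symm posdef by unfold_locales auto
  have Ax: "A *v x = y" unfolding x_def by (rule A_matrix_inv_cancel)
  have "measure_pmf.expectation Q xtss = cg_x y imax"
    unfolding xtss_def using assms(3,4) supp pos by (intro expectation_telescoping_estimator) auto
  moreover have "measure_pmf.expectation Q (\<lambda>j. (norm (xtss j - measure_pmf.expectation Q xtss))\<^sup>2)
      \<le> (\<Sum>j=imin..imax. (norm (cg_x y j - cg_x y (j - 1)))\<^sup>2 / pmf Q j)"
    unfolding xtss_def using supp pos by (rule variance_telescoping_estimator_le)
  moreover have "\<dots> \<le> (\<Sum>j=imin..imax. 16 * (cond2 A)\<^sup>2 * (norm x)\<^sup>2 * \<rho> ^ (2 * (j - 1)) / pmf Q j)"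
    using assms(3) pos cg_increment_le[OF Ax]
    by (intro sum_mono divide_right_mono) (auto simp: \<rho>_def rho_def less_imp_le)
  ultimately show ?thesis
    by (simp add: sum_distrib_left)
qed

end
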